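(* Let $\mathcal{M}=(E,\rho)$ be a $q$-matroid and $V$ a subspace of $E$. Then $V$ is independent if and only if $\dim(V\cap Z)\le\rho(Z)$ for all $Z\in\mathcal{Z}(\mathcal{M})$. Consequently, the cyclic flats of $\mathcal{M}$ together with their rank values determine the collection of independent spaces and hence the $q$-matroid $\mathcal{M}$.
   Context: Let $\mathbb{F}=\mathbb{F}_q$, $E$ a finite-dimensional $\mathbb{F}$-vector space. A $q$-matroid is $\mathcal{M}=(E,\rho)$ with $\rho$ from subspaces of $E$ to $\mathbb{Z}_{\ge0}$ satisfying $0\le\rho(V)\le\dim V$, monotonicity, and submodularity $\rho(V+W)+\rho(V\cap W)\le\rho(V)+\rho(W)$. $V$ is independent if $\rho(V)=\dim V$. A flat is $F$ with $\rho(F+\langle x\rangle)>\rho(F)$ for all $x\in E\setminus F$. The cyclic core is $\mathrm{cyc}(V)=\{x\in V\mid\rho(W)=\rho(V)\text{ for all }W\le V\text{ with }W+\langle x\rangle=V\}$; $V$ is cyclic if $\mathrm{cyc}(V)=V$. $\mathcal{Z}(\mathcal{M})$ is the set of cyclic flats (subspaces that are both flats and cyclic). *)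

theory Defs
  imports Complex_Main
begin

text \<open>The ambient space E is the whole carrier type 'v, a finite-dimensional vector
space over the finite field 'f (i.e. F_q) with scalar multiplication scale.
A rank function is a map from sets of vectors to nat; only its values on subspaces matter.\<close>

definition q_matroid :: "('f::{finite,field} \<Rightarrow> 'v::ab_group_add \<Rightarrow> 'v) \<Rightarrow> ('v set \<Rightarrow> nat) \<Rightarrow> bool" where
  "q_matroid scale \<rho> \<longleftrightarrow>
     (\<exists>B. finite_dimensional_vector_space scale B) \<and>
     (\<forall>V. module.subspace scale V \<longrightarrow> \<rho> V \<le> vector_space.dim scale V) \<and>
     (\<forall>V W. module.subspace scale V \<and> module.subspace scale W \<and> V \<subseteq> W \<longrightarrow> \<rho> V \<le> \<rho> W) \<and>
     (\<forall>V W. module.subspace scale V \<and> module.subspace scale W \<longrightarrow>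
        \<rho> (module.span scale (V \<union> W)) + \<rho> (V \<inter> W) \<le> \<rho> V + \<rho> W)"

definition q_indep :: "('f::field \<Rightarrow> 'v::ab_group_add \<Rightarrow> 'v) \<Rightarrow> ('v set \<Rightarrow> nat) \<Rightarrow> 'v set \<Rightarrow> bool" where
  "q_indep scale \<rho> V \<longleftrightarrow> \<rho> V = vector_space.dim scale V"

definition q_flat :: "('f::field \<Rightarrow> 'v::ab_group_add \<Rightarrow> 'v) \<Rightarrow> ('v set \<Rightarrow> nat) \<Rightarrow> 'v set \<Rightarrow> bool" where
  "q_flat scale \<rho> F \<longleftrightarrow> module.subspace scale F \<and>
     (\<forall>x. x \<notin> F \<longrightarrow> \<rho> (module.span scale (F \<union> module.span scale {x})) > \<rho> F)"

definition q_cyc :: "('f::field \<Rightarrow> 'v::ab_group_add \<Rightarrow> 'v) \<Rightarrow> ('v set \<Rightarrow> nat) \<Rightarrow> 'v set \<Rightarrow> 'v set" where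
  "q_cyc scale \<rho> V = {x \<in> V. \<forall>W. module.subspace scale W \<and> W \<subseteq> V \<and>
       module.span scale (W \<union> module.span scale {x}) = V \<longrightarrow> \<rho> W = \<rho> V}"

definition q_cyclic :: "('f::field \<Rightarrow> 'v::ab_group_add \<Rightarrow> 'v) \<Rightarrow> ('v set \<Rightarrow> nat) \<Rightarrow> 'v set \<Rightarrow> bool" where
  "q_cyclic scale \<rho> V \<longleftrightarrow> q_cyc scale \<rho> V = V"

definition cyclic_flats :: "('f::field \<Rightarrow> 'v::ab_group_add \<Rightarrow> 'v) \<Rightarrow> ('v set \<Rightarrow> nat) \<Rightarrow> 'v set set" where
  "cyclic_flats scale \<rho> = {Z. q_flat scale \<rho> Z \<and> q_cyclic scale \<rho> Z}"

end

theory Submission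
  imports Defs
begin

text \<open>
  If V is dependent, the excess e(W) = dim (V \<inter> W) - \<rho> W is positive at W = V, and it is
  supermodular because dim is modular and \<rho> is submodular. Take a maximiser W0 of e of least
  dimension, and a largest superspace W1 of W0 of the same rank; W1 is a flat and a maximiser
  of e. If W1 were not cyclic, some hyperplane U of W1 would have smaller rank; then U is
  again a maximiser, by supermodularity so is U \<inter> W0, and minimality forces W0 \<subseteq> U, contradicting
  \<rho> U < \<rho> W0. So W1 is a cyclic flat with dim (V \<inter> W1) > \<rho> W1. Conversely, subspaces of
  independent spaces are independent. Finally, \<rho> V is the largest dimension of an independent
  subspace of V, so the independent spaces, and hence the cyclic flats with their ranks,
  determine \<rho>.
\<close>

locale q_rank = finite_dimensional_vector_space scale Basis
  for scale :: "'f::field \<Rightarrow> 'v::ab_group_add \<Rightarrow> 'v" and Basis :: "'v set" +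
  fixes \<rho> :: "'v set \<Rightarrow> nat"
  assumes rank_le_dim: "subspace V \<Longrightarrow> \<rho> V \<le> dim V"
    and rank_mono: "subspace V \<Longrightarrow> subspace W \<Longrightarrow> V \<subseteq> W \<Longrightarrow> \<rho> V \<le> \<rho> W"
    and rank_submodular:
      "subspace V \<Longrightarrow> subspace W \<Longrightarrow> \<rho> (span (V \<union> W)) + \<rho> (V \<inter> W) \<le> \<rho> V + \<rho> W"
begin

lemma span_Un_span_singleton: "span (A \<union> span {x}) = span (insert x A)"
proof -
  have "span {x} \<subseteq> span (insert x A)" by (rule span_mono) simp
  then show ?thesis
    unfolding span_eq by (auto intro: span_base)
qed

lemma dim_span_insert: "subspace A \<Longrightarrow> x \<notin> A \<Longrightarrow> dim (span (insert x A)) = Suc (dim A)"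
  by (metis dim_insert dim_span span_eq_iff Suc_eq_plus1)

lemma dim_span_Un_Int:
  assumes "subspace S" "subspace T"
  shows "dim (span (S \<union> T)) + dim (S \<inter> T) = dim S + dim T"
proof -
  have span_S: "span S = S" and span_T: "span T = T" using assms by simp_all
  show ?thesis using dim_sums_Int[OF assms] unfolding span_Un span_S span_T .
qed

lemma dim_Int_add_le:
  assumes sV: "subspace V" and sU: "subspace U" and sW: "subspace W" and UW: "U \<subseteq> W"
  shows "dim (V \<inter> W) + dim U \<le> dim (V \<inter> U) + dim W"
proof -
  have "dim (span ((V \<inter> W) \<union> U)) \<le> dim W"
    using sW UW by (intro dim_subset span_minimal) auto
  moreover have "(V \<inter> W) \<inter> U = V \<inter> U" using UW by blast
  ultimately show ?thesis
    using dim_span_Un_Int[OF subspace_inter[OF sV sW] sU] by simp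
qed

lemma ex_dim_greatest: "P A \<Longrightarrow> \<exists>B. P B \<and> (\<forall>C. P C \<longrightarrow> dim C \<le> dim B)"
  using ex_has_greatest_nat[of P A dim "Suc dimension"] dim_subset_UNIV by (simp add: le_imp_less_Suc)

lemma rank_mono_span_insert: "subspace A \<Longrightarrow> \<rho> A \<le> \<rho> (span (insert x A))"
  by (meson rank_mono span_superset subset_insertI subset_trans subspace_span)

lemma rank_span_insert_le: "subspace A \<Longrightarrow> \<rho> (span (insert x A)) \<le> Suc (\<rho> A)"
proof -
  assume sA: "subspace A"
  have "\<rho> (span {x}) \<le> 1"
    using rank_le_dim[of "span {x}"] by (simp split: if_split_asm)
  then show ?thesis
    using rank_submodular[OF sA, of "span {x}"] by (simp add: span_Un_span_singleton)
qed

lemma rank_add_dim_le: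
  "subspace W \<Longrightarrow> subspace V \<Longrightarrow> W \<subseteq> V \<Longrightarrow> \<rho> V + dim W \<le> \<rho> W + dim V"
proof (induction "dim V - dim W" arbitrary: W rule: less_induct)
  case less
  show ?case
  proof (cases "W = V")
    case False
    then obtain x where x: "x \<in> V" "x \<notin> W" using less.prems by blast
    let ?W' = "span (insert x W)"
    have W'V: "?W' \<subseteq> V" using less.prems x by (simp add: span_minimal)
    have dim_W': "dim ?W' = Suc (dim W)" using dim_span_insert less.prems x by simp
    then have "dim V - dim ?W' < dim V - dim W" using dim_subset[OF W'V] by linarith
    then have "\<rho> V + dim ?W' \<le> \<rho> ?W' + dim V"
      using less.hyps[OF _ subspace_span less.prems(2) W'V] by blast
    then show ?thesis
      using rank_span_insert_le[OF less.prems(1), of x] dim_W' by simp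
  qed simp
qed

lemma q_indep_subspace:
  assumes "q_indep scale \<rho> V" "subspace V" "subspace W" "W \<subseteq> V"
  shows "q_indep scale \<rho> W"
  using assms rank_add_dim_le[of W V] rank_le_dim[of W] by (simp add: q_indep_def)

lemma rank_span_Un_eq:
  assumes sA: "subspace A" and "finite S"
    and "\<forall>x\<in>S. \<rho> (span (insert x A)) = \<rho> A"
  shows "\<rho> (span (A \<union> S)) = \<rho> A"
  using assms(2,3)
proof (induction S rule: finite_induct)
  case empty
  have span_A: "span A = A" using sA by simp
  show ?case unfolding Un_empty_right span_A ..
next
  case (insert x S)
  let ?P = "span (insert x A)" and ?Q = "span (A \<union> S)"
  have rank_PQ: "\<rho> ?P = \<rho> A" "\<rho> ?Q = \<rho> A" using insert by simp_all
  have "\<rho> A \<le> \<rho> (?P \<inter> ?Q)"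
    using sA by (intro rank_mono) (auto intro: span_base subspace_inter)
  moreover have "span (?P \<union> ?Q) = span (A \<union> insert x S)"
    unfolding span_eq by (auto intro: span_base span_mono[THEN subsetD])
  moreover have "\<rho> A \<le> \<rho> (span (A \<union> insert x S))"
    using sA by (intro rank_mono) (auto intro: span_base)
  ultimately show ?case
    using rank_submodular[of ?P ?Q] rank_PQ by simp
qed

lemma exists_indep_subspace_rank:
  assumes sV: "subspace V"
  obtains I where "subspace I" "I \<subseteq> V" "q_indep scale \<rho> I" "dim I = \<rho> V"
proof -
  let ?P = "\<lambda>I. subspace I \<and> I \<subseteq> V \<and> q_indep scale \<rho> I"
  have "?P {0}"
    using sV rank_le_dim[of "{0}"] by (simp add: q_indep_def subspace_0)
  from ex_dim_greatest[of ?P, OF this]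
  obtain I where P_I: "?P I" and I_max: "\<forall>J. ?P J \<longrightarrow> dim J \<le> dim I"
    by blast
  have "\<rho> (span (insert x I)) = \<rho> I" if "x \<in> V" for x
  proof (cases "x \<in> I")
    case True
    then have "span (insert x I) = I" using P_I by (simp add: span_redundant span_base)
    then show ?thesis by simp
  next
    case False
    let ?J = "span (insert x I)"
    have dim_J: "dim ?J = Suc (dim I)" using dim_span_insert P_I False by simp
    have "?J \<subseteq> V" using P_I sV \<open>x \<in> V\<close> by (simp add: span_minimal)
    then have "\<not> q_indep scale \<rho> ?J" using I_max dim_J by fastforce
    then show ?thesis
      using P_I dim_J rank_le_dim[of ?J] rank_mono_span_insert[of I x]
      by (simp add: q_indep_def)
  qed
  moreover obtain B where B: "finite B" "B \<subseteq> V" "span B = V"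
    using basis_subspace_exists[OF sV] by metis
  moreover have "span (I \<union> B) = V"
  proof
    show "span (I \<union> B) \<subseteq> V" using P_I B(2) sV by (simp add: span_minimal)
    show "V \<subseteq> span (I \<union> B)" using B(3) span_mono[of B "I \<union> B"] by blast
  qed
  ultimately have "\<rho> V = \<rho> I"
    using rank_span_Un_eq[of I B] P_I by auto
  with P_I show thesis by (intro that) (auto simp: q_indep_def)
qed

lemma rank_eq_Max_indep:
  assumes sV: "subspace V"
  shows "\<rho> V = Max (dim ` {I. subspace I \<and> I \<subseteq> V \<and> q_indep scale \<rho> I})"
    (is "_ = Max ?D")
proof (rule sym, rule Max_eqI)
  show "finite ?D"
    by (rule finite_subset[of _ "{..dimension}"]) (auto simp: dim_subset_UNIV)
  show "d \<le> \<rho> V" if "d \<in> ?D" for d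
  proof -
    from that obtain I where sI: "subspace I" and I_V: "I \<subseteq> V"
      and "q_indep scale \<rho> I" "d = dim I"
      by blast
    then show ?thesis using rank_mono[OF sI sV I_V] by (simp add: q_indep_def)
  qed
  obtain I where "subspace I" "I \<subseteq> V" "q_indep scale \<rho> I" and dim_I: "dim I = \<rho> V"
    using exists_indep_subspace_rank[OF sV] .
  then have "dim I \<in> ?D" by blast
  then show "\<rho> V \<in> ?D" unfolding dim_I .
qed

definition excess :: "'v set \<Rightarrow> 'v set \<Rightarrow> int" where
  "excess V W = int (dim (V \<inter> W)) - int (\<rho> W)"

lemma excess_supermodular:
  assumes sV: "subspace V" and sU: "subspace U" and sW: "subspace W"
  shows "excess V U + excess V W \<le> excess V (span (U \<union> W)) + excess V (U \<inter> W)"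
proof -
  have "(V \<inter> U) \<union> (V \<inter> W) \<subseteq> V \<inter> span (U \<union> W)"
    using span_superset by blast
  then have "span ((V \<inter> U) \<union> (V \<inter> W)) \<subseteq> V \<inter> span (U \<union> W)"
    using subspace_inter[OF sV subspace_span] by (rule span_minimal)
  moreover have "(V \<inter> U) \<inter> (V \<inter> W) = V \<inter> (U \<inter> W)" by blast
  ultimately have "dim (V \<inter> U) + dim (V \<inter> W) \<le> dim (V \<inter> span (U \<union> W)) + dim (V \<inter> (U \<inter> W))"
    using dim_span_Un_Int[OF subspace_inter[OF sV sU] subspace_inter[OF sV sW]] dim_subset
    by (metis add_le_mono1)
  then show ?thesis
    using rank_submodular[OF sU sW] unfolding excess_def by linarith
qed

lemma excess_mono_same_rank: "W \<subseteq> W' \<Longrightarrow> \<rho> W' = \<rho> W \<Longrightarrow> excess V W \<le> excess V W'"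
  unfolding excess_def using dim_subset[of "V \<inter> W" "V \<inter> W'"] by auto

lemma exists_min_dim_excess_maximiser:
  obtains W0 where "subspace W0" "\<And>W. subspace W \<Longrightarrow> excess V W \<le> excess V W0"
    "\<And>W. subspace W \<Longrightarrow> excess V W = excess V W0 \<Longrightarrow> dim W0 \<le> dim W"
proof -
  define m where "m = Max (excess V ` Collect subspace)"
  have "excess V ` Collect subspace \<subseteq> {- int dimension .. int dimension}"
  proof (rule image_subsetI)
    fix W assume "W \<in> Collect subspace"
    then show "excess V W \<in> {- int dimension .. int dimension}"
      using dim_subset_UNIV[of "V \<inter> W"] dim_subset_UNIV[of W] rank_le_dim[of W]
      unfolding excess_def by simp
  qed
  then have fin: "finite (excess V ` Collect subspace)"
    by (rule finite_subset) simp
  have m_ge: "excess V W \<le> m" if "subspace W" for W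
    unfolding m_def by (rule Max_ge[OF fin]) (use that in blast)
  have "m \<in> excess V ` Collect subspace"
    unfolding m_def using fin subspace_UNIV by (intro Max_in) auto
  then obtain Wm where "subspace Wm \<and> excess V Wm = m" by blast
  from ex_has_least_nat[of "\<lambda>W. subspace W \<and> excess V W = m", OF this]
  obtain W0 where W0: "subspace W0" "excess V W0 = m"
    and W0_min: "\<forall>W. subspace W \<and> excess V W = m \<longrightarrow> dim W0 \<le> dim W"
    by blast
  show thesis
    by (rule that[OF W0(1)]) (simp_all add: W0(2) m_ge W0_min)
qed

lemma q_cyclicI:
  assumes "\<And>x U. x \<in> W \<Longrightarrow> subspace U \<Longrightarrow> U \<subseteq> W \<Longrightarrow> x \<notin> U \<Longrightarrow> span (insert x U) = W
    \<Longrightarrow> \<rho> U = \<rho> W"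
  shows "q_cyclic scale \<rho> W"
proof -
  have "\<rho> U = \<rho> W" if "x \<in> W" "subspace U" "U \<subseteq> W" "span (insert x U) = W" for x U
  proof (cases "x \<in> U")
    case True
    then have "span (insert x U) = U" using that(2) by (simp add: span_redundant span_base)
    with that(4) show ?thesis by simp
  qed (use that assms in blast)
  then show ?thesis
    unfolding q_cyclic_def q_cyc_def span_Un_span_singleton by auto
qed

lemma q_cyclic_same_rank_superset:
  assumes sV: "subspace V" and sW0: "subspace W0"
    and W0_max: "\<And>W. subspace W \<Longrightarrow> excess V W \<le> excess V W0"
    and W0_min: "\<And>W. subspace W \<Longrightarrow> excess V W = excess V W0 \<Longrightarrow> dim W0 \<le> dim W"
    and sW1: "subspace W1" and W0_W1: "W0 \<subseteq> W1" and rank_W1: "\<rho> W1 = \<rho> W0"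
  shows "q_cyclic scale \<rho> W1"
proof (rule q_cyclicI)
  fix x U
  assume sU: "subspace U" and U_W1: "U \<subseteq> W1" and "x \<notin> U" and span_xU: "span (insert x U) = W1"
  show "\<rho> U = \<rho> W1"
  proof (rule ccontr)
    assume "\<rho> U \<noteq> \<rho> W1"
    moreover have "\<rho> W1 \<le> Suc (\<rho> U)"
      using rank_span_insert_le[OF sU, of x] unfolding span_xU .
    ultimately have rank_U: "\<rho> W1 = Suc (\<rho> U)"
      using rank_mono[OF sU sW1 U_W1] by simp
    have dim_W1: "dim W1 = Suc (dim U)"
      using dim_span_insert[OF sU \<open>x \<notin> U\<close>] unfolding span_xU .
    have "excess V W1 \<le> excess V U"
      using dim_Int_add_le[OF sV sU sW1 U_W1] dim_W1 rank_U unfolding excess_def by simp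
    moreover have "excess V W0 \<le> excess V W1" using W0_W1 rank_W1 by (rule excess_mono_same_rank)
    ultimately have "excess V U = excess V W0" using W0_max[OF sU] by simp
    then have "excess V (U \<inter> W0) = excess V W0"
      using excess_supermodular[OF sV sU sW0] W0_max[of "span (U \<union> W0)"] W0_max[of "U \<inter> W0"]
        subspace_inter[OF sU sW0] by simp
    then have "U \<inter> W0 = W0"
      using W0_min subspace_dim_equal[of "U \<inter> W0" W0] subspace_inter[OF sU sW0] sW0 by blast
    then have "\<rho> W0 \<le> \<rho> U" using rank_mono[OF sW0 sU] by blast
    then show False using rank_U rank_W1 by simp
  qed
qed

lemma exists_flat_same_rank_superset:
  assumes sW0: "subspace W0"
  obtains W1 where "W0 \<subseteq> W1" "\<rho> W1 = \<rho> W0" "q_flat scale \<rho> W1"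
proof -
  let ?P = "\<lambda>W. subspace W \<and> W0 \<subseteq> W \<and> \<rho> W = \<rho> W0"
  obtain W1 where P_W1: "?P W1" and W1_max: "\<forall>W. ?P W \<longrightarrow> dim W \<le> dim W1"
    using ex_dim_greatest[of ?P W0] sW0 by auto
  have "\<rho> W1 < \<rho> (span (insert x W1))" if "x \<notin> W1" for x
  proof (rule ccontr)
    assume "\<not> ?thesis"
    then have "?P (span (insert x W1))"
      using P_W1 rank_mono_span_insert[of W1 x] span_superset by fastforce
    then show False
      using W1_max dim_span_insert[of W1 x] P_W1 that by fastforce
  qed
  then have "q_flat scale \<rho> W1" using P_W1 by (simp add: q_flat_def span_Un_span_singleton)
  with P_W1 show thesis by (intro that) auto
qed

lemma exists_cyclic_flat_exceeding:
  assumes sV: "subspace V" and dep: "\<not> q_indep scale \<rho> V"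
  obtains Z where "Z \<in> cyclic_flats scale \<rho>" "\<rho> Z < dim (V \<inter> Z)"
proof -
  obtain W0 where sW0: "subspace W0" and W0_max: "\<And>W. subspace W \<Longrightarrow> excess V W \<le> excess V W0"
    and W0_min: "\<And>W. subspace W \<Longrightarrow> excess V W = excess V W0 \<Longrightarrow> dim W0 \<le> dim W"
    using exists_min_dim_excess_maximiser[of V] by metis
  obtain W1 where W0_W1: "W0 \<subseteq> W1" and rank_W1: "\<rho> W1 = \<rho> W0" and flat: "q_flat scale \<rho> W1"
    by (rule exists_flat_same_rank_superset[OF sW0])
  have "subspace W1" using flat unfolding q_flat_def by blast
  note cyclic = q_cyclic_same_rank_superset[OF sV sW0 W0_max W0_min this W0_W1 rank_W1]
  have "0 < excess V V"
    using dep rank_le_dim[OF sV] unfolding q_indep_def excess_def by simp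
  also have "\<dots> \<le> excess V W0" by (rule W0_max[OF sV])
  also have "\<dots> \<le> excess V W1" using W0_W1 rank_W1 by (rule excess_mono_same_rank)
  finally have "\<rho> W1 < dim (V \<inter> W1)" unfolding excess_def by simp
  show thesis
  proof (rule that[of W1])
    show "W1 \<in> cyclic_flats scale \<rho>" unfolding cyclic_flats_def using flat cyclic by blast
  qed fact
qed

lemma q_indep_iff_cyclic_flats:
  assumes sV: "subspace V"
  shows "q_indep scale \<rho> V \<longleftrightarrow> (\<forall>Z\<in>cyclic_flats scale \<rho>. dim (V \<inter> Z) \<le> \<rho> Z)"
proof
  assume indep: "q_indep scale \<rho> V"
  show "\<forall>Z\<in>cyclic_flats scale \<rho>. dim (V \<inter> Z) \<le> \<rho> Z"
  proof
    fix Z assume "Z \<in> cyclic_flats scale \<rho>"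
    then have sZ: "subspace Z" by (simp add: cyclic_flats_def q_flat_def)
    then have "q_indep scale \<rho> (V \<inter> Z)"
      using q_indep_subspace[OF indep sV] subspace_inter[OF sV] by blast
    then show "dim (V \<inter> Z) \<le> \<rho> Z"
      using rank_mono[of "V \<inter> Z" Z] subspace_inter[OF sV sZ] sZ by (simp add: q_indep_def)
  qed
next
  assume bounded: "\<forall>Z\<in>cyclic_flats scale \<rho>. dim (V \<inter> Z) \<le> \<rho> Z"
  show "q_indep scale \<rho> V"
  proof (rule ccontr)
    assume "\<not> q_indep scale \<rho> V"
    then obtain Z where "Z \<in> cyclic_flats scale \<rho>" "\<rho> Z < dim (V \<inter> Z)"
      by (rule exists_cyclic_flat_exceeding[OF sV])
    with bounded show False by fastforce
  qed
qed

lemma rank_eq_if_same_indep: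
  assumes "q_rank scale Basis \<rho>'"
    and "\<And>I. subspace I \<Longrightarrow> q_indep scale \<rho>' I \<longleftrightarrow> q_indep scale \<rho> I"
    and "subspace V"
  shows "\<rho>' V = \<rho> V"
  using rank_eq_Max_indep[OF assms(3)] q_rank.rank_eq_Max_indep[OF assms(1,3)] assms(2)
  by (metis (no_types, lifting) Collect_cong)

end

lemma q_rank_if_q_matroid:
  assumes "finite_dimensional_vector_space scale B" and "q_matroid scale \<rho>"
  shows "q_rank scale B \<rho>"
proof (rule q_rank.intro)
  show "q_rank_axioms scale \<rho>"
    using assms(2) unfolding q_matroid_def q_rank_axioms_def by auto
qed fact

theorem theorem4p5:
  fixes scale :: "'f::{finite,field} \<Rightarrow> 'v::ab_group_add \<Rightarrow> 'v"
    and \<rho> :: "'v set \<Rightarrow> nat"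
  assumes "q_matroid scale \<rho>"
  shows "(\<forall>V. module.subspace scale V \<longrightarrow>
            (q_indep scale \<rho> V \<longleftrightarrow>
              (\<forall>Z\<in>cyclic_flats scale \<rho>. vector_space.dim scale (V \<inter> Z) \<le> \<rho> Z)))
     \<and> (\<forall>\<rho>'. q_matroid scale \<rho>' \<and> cyclic_flats scale \<rho>' = cyclic_flats scale \<rho>
              \<and> (\<forall>Z\<in>cyclic_flats scale \<rho>. \<rho>' Z = \<rho> Z) \<longrightarrow>
            (\<forall>V. module.subspace scale V \<longrightarrow> (q_indep scale \<rho>' V \<longleftrightarrow> q_indep scale \<rho> V))
            \<and> (\<forall>V. module.subspace scale V \<longrightarrow> \<rho>' V = \<rho> V))"
proof -
  have "\<exists>B. finite_dimensional_vector_space scale B"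
    using assms unfolding q_matroid_def by (rule conjunct1)
  then obtain B where "finite_dimensional_vector_space scale B" ..
  then have q_rank: "q_rank scale B \<rho>'" if "q_matroid scale \<rho>'" for \<rho>'
    using that by (rule q_rank_if_q_matroid)
  note indep_iff = q_rank.q_indep_iff_cyclic_flats[OF q_rank]
  have same_indep: "q_indep scale \<rho>' V \<longleftrightarrow> q_indep scale \<rho> V"
    if "q_matroid scale \<rho>'" "cyclic_flats scale \<rho>' = cyclic_flats scale \<rho>"
      "\<forall>Z\<in>cyclic_flats scale \<rho>. \<rho>' Z = \<rho> Z" "module.subspace scale V" for \<rho>' V
    using indep_iff[OF that(1,4)] indep_iff[OF assms that(4)] that(2,3) by simp
  have same_rank: "\<rho>' V = \<rho> V"
    if "q_matroid scale \<rho>'" "cyclic_flats scale \<rho>' = cyclic_flats scale \<rho>"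
      "\<forall>Z\<in>cyclic_flats scale \<rho>. \<rho>' Z = \<rho> Z" "module.subspace scale V" for \<rho>' V
    using q_rank.rank_eq_if_same_indep[OF q_rank[OF assms] q_rank[OF that(1)]
        same_indep[OF that(1-3)] that(4)] .
  show ?thesis
    using indep_iff[OF assms] same_indep same_rank by blast
qed

end
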